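(* Let $G=(V,E)$ be an undirected graph having a strongly connected orientation. A strongly connected orientation $D$ of $G$ is decreasingly minimal among the strongly connected orientations of $G$ if and only if there are no nodes $s,t$ with $\varrho_D(t)\ge\varrho_D(s)+2$ such that $D$ contains two arc-disjoint directed paths from $s$ to $t$.
   Context: $\varrho_D(v)$ is the number of arcs with head $v$. An orientation is decreasingly minimal among a class if its in-degree vector has largest component as small as possible within the class, then second largest as small as possible, and so on. *)

theory Defs
  imports Main "HOL-Library.Multiset"
begin

text \<open>Parallel edges are allowed (distinct identifiers with the same ends).\<close>

definition ugraph :: "'v set \<Rightarrow> 'e set \<Rightarrow> ('e \<Rightarrow> 'v \<times> 'v) \<Rightarrow> bool" where
  "ugraph V E ends \<longleftrightarrow> finite V \<and> finite E \<and>
     (\<forall>e\<in>E. fst (ends e) \<in> V \<and> snd (ends e) \<in> V)"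

definition orientation :: "'e set \<Rightarrow> ('e \<Rightarrow> 'v \<times> 'v) \<Rightarrow> ('e \<Rightarrow> 'v \<times> 'v) \<Rightarrow> bool" where
  "orientation E ends D \<longleftrightarrow> (\<forall>e\<in>E. D e = ends e \<or> D e = prod.swap (ends e))"

definition indeg :: "'e set \<Rightarrow> ('e \<Rightarrow> 'v \<times> 'v) \<Rightarrow> 'v \<Rightarrow> nat" where
  "indeg E D v = card {e\<in>E. snd (D e) = v}"

fun dwalk :: "'e set \<Rightarrow> ('e \<Rightarrow> 'v \<times> 'v) \<Rightarrow> 'v \<Rightarrow> 'v \<Rightarrow> 'e list \<Rightarrow> bool" where
  "dwalk E D s t [] \<longleftrightarrow> s = t"
| "dwalk E D s t (e # es) \<longleftrightarrow> e \<in> E \<and> fst (D e) = s \<and> dwalk E D (snd (D e)) t es"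

definition dpath :: "'v set \<Rightarrow> 'e set \<Rightarrow> ('e \<Rightarrow> 'v \<times> 'v) \<Rightarrow> 'v \<Rightarrow> 'v \<Rightarrow> 'e list \<Rightarrow> bool" where
  "dpath V E D s t es \<longleftrightarrow> s \<in> V \<and> dwalk E D s t es \<and> distinct (s # map (\<lambda>e. snd (D e)) es)"

definition strongly_connected :: "'v set \<Rightarrow> 'e set \<Rightarrow> ('e \<Rightarrow> 'v \<times> 'v) \<Rightarrow> bool" where
  "strongly_connected V E D \<longleftrightarrow> (\<forall>u\<in>V. \<forall>v\<in>V. \<exists>es. dpath V E D u v es)"

definition strong_orientation ::
  "'v set \<Rightarrow> 'e set \<Rightarrow> ('e \<Rightarrow> 'v \<times> 'v) \<Rightarrow> ('e \<Rightarrow> 'v \<times> 'v) \<Rightarrow> bool" where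
  "strong_orientation V E ends D \<longleftrightarrow> orientation E ends D \<and> strongly_connected V E D"

definition indeg_vector :: "'v set \<Rightarrow> 'e set \<Rightarrow> ('e \<Rightarrow> 'v \<times> 'v) \<Rightarrow> nat list" where
  "indeg_vector V E D = rev (sorted_list_of_multiset (image_mset (indeg E D) (mset_set V)))"

definition lex_less :: "nat list \<Rightarrow> nat list \<Rightarrow> bool" where
  "lex_less xs ys \<longleftrightarrow> (\<exists>i < length xs. i < length ys \<and> take i xs = take i ys \<and> xs ! i < ys ! i)"

definition dec_min_strong ::
  "'v set \<Rightarrow> 'e set \<Rightarrow> ('e \<Rightarrow> 'v \<times> 'v) \<Rightarrow> ('e \<Rightarrow> 'v \<times> 'v) \<Rightarrow> bool" where
  "dec_min_strong V E ends D \<longleftrightarrow> strong_orientation V E ends D \<and>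
     (\<forall>D'. strong_orientation V E ends D' \<longrightarrow>
        \<not> lex_less (indeg_vector V E D') (indeg_vector V E D))"

end

theory Submission
  imports Defs
begin

text \<open>Reversing one of two arc-disjoint \<open>s\<close>-\<open>t\<close> paths keeps the orientation strongly
  connected, since every cut separating \<open>t\<close> from \<open>s\<close> was entered by both paths; it raises the
  in-degree of \<open>s\<close> and lowers that of \<open>t\<close> by one, which decreases the sorted in-degree vector
  lexicographically when \<open>\<varrho>(t) \<ge> \<varrho>(s) + 2\<close>.

  Conversely, if a strongly connected \<open>D'\<close> had a lexicographically smaller vector, then for
  some threshold \<open>c\<close> the total excess \<open>\<Sum>\<^sub>v (\<varrho>(v) - c)\<^sup>+\<close> would be smaller for \<open>D'\<close> than for \<open>D\<close>.
  Let \<open>Z\<close> be the set of nodes from which some node of in-degree \<open>> c\<close> is reached by two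
  arc-disjoint paths of \<open>D\<close>. Without an improving pair, \<open>\<varrho>\<^sub>D \<ge> c\<close> on \<open>Z\<close> and \<open>\<varrho>\<^sub>D \<le> c\<close> off \<open>Z\<close>,
  and by Menger every node of \<open>Z\<close> is separated from every node outside \<open>Z\<close> by a set entered by
  at most one arc of \<open>D\<close>. Such tight sets form a crossing family on which \<open>\<varrho>\<^sub>D\<^sub>' - \<varrho>\<^sub>D\<close> is
  nonnegative, and uncrossing yields \<open>\<varrho>\<^sub>D\<^sub>'(Z) \<ge> \<varrho>\<^sub>D(Z)\<close>, contradicting the excess inequality.\<close>

lemma dwalk_set: "dwalk A D s t p \<Longrightarrow> set p \<subseteq> A"
  by (induction p arbitrary: s) auto

lemma dwalk_mono: "dwalk A D s t p \<Longrightarrow> A \<subseteq> B \<Longrightarrow> dwalk B D s t p"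
  by (induction p arbitrary: s) auto

lemma dwalk_snoc:
  "dwalk A D s t (p @ [e]) \<longleftrightarrow> dwalk A D s (fst (D e)) p \<and> e \<in> A \<and> snd (D e) = t"
  by (induction p arbitrary: s) auto

lemma dwalk_drop:
  "dwalk A D s t p \<Longrightarrow> j < length p \<Longrightarrow> dwalk A D (snd (D (p ! j))) t (drop (Suc j) p)"
  by (induction p arbitrary: s j) (auto simp: nth_Cons split: nat.splits)

lemma dwalk_shortcut:
  "dwalk A D s t p \<Longrightarrow> \<exists>q. dwalk A D s t q \<and> distinct (s # map (\<lambda>e. snd (D e)) q)"
proof (induction p arbitrary: s)
  case Nil
  then show ?case by (intro exI[of _ "[]"]) simp
next
  case (Cons e p)
  then have e: "e \<in> A" "fst (D e) = s" and "dwalk A D (snd (D e)) t p" by auto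
  with Cons.IH obtain q where q: "dwalk A D (snd (D e)) t q"
    and dq: "distinct (snd (D e) # map (\<lambda>e. snd (D e)) q)" by blast
  show ?case
  proof (cases "s \<in> set (snd (D e) # map (\<lambda>e. snd (D e)) q)")
    case False
    then show ?thesis using e q dq by (intro exI[of _ "e # q"]) auto
  next
    case True
    then consider "s = snd (D e)" | j where "j < length q" "snd (D (q ! j)) = s"
      by (auto simp: in_set_conv_nth)
    then show ?thesis
    proof cases
      case 1
      then show ?thesis using q dq by auto
    next
      case 2
      let ?xs = "map (\<lambda>e. snd (D e)) q"
      have "drop j ?xs = ?xs ! j # drop (Suc j) ?xs"
        using 2(1) Cons_nth_drop_Suc[of j ?xs] by simp
      moreover have "distinct (drop j ?xs)"
        using dq by (simp add: distinct_drop)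
      ultimately have "?xs ! j \<notin> set (drop (Suc j) ?xs)" "distinct (drop (Suc j) ?xs)"
        by (metis distinct.simps(2))+
      then have "distinct (s # map (\<lambda>e. snd (D e)) (drop (Suc j) q))"
        using 2 by (simp add: drop_map)
      moreover have "dwalk A D s t (drop (Suc j) q)"
        using dwalk_drop[OF q 2(1)] 2(2) by simp
      ultimately show ?thesis by blast
    qed
  qed
qed

lemma dpath_arcs_subset: "dpath V A D s t p \<Longrightarrow> set p \<subseteq> A"
  unfolding dpath_def by (auto dest: dwalk_set)

lemma dpath_mono: "dpath V A D s t p \<Longrightarrow> A \<subseteq> B \<Longrightarrow> dpath V B D s t p"
  by (auto simp: dpath_def intro: dwalk_mono)

lemma dpath_distinct_arcs: "dpath V A D s t p \<Longrightarrow> distinct p"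
  by (auto simp: dpath_def distinct_map)

section \<open>Cuts\<close>

definition arcs_in :: "'v set \<Rightarrow> 'e set \<Rightarrow> ('e \<Rightarrow> 'v \<times> 'v) \<Rightarrow> bool" where
  "arcs_in V A D \<longleftrightarrow> (\<forall>e\<in>A. fst (D e) \<in> V \<and> snd (D e) \<in> V)"

lemma orientation_arcs_in: "ugraph V E ends \<Longrightarrow> orientation E ends D \<Longrightarrow> arcs_in V E D"
  unfolding ugraph_def orientation_def arcs_in_def by (metis fst_swap snd_swap)

definition enter :: "('e \<Rightarrow> 'v \<times> 'v) \<Rightarrow> 'e set \<Rightarrow> 'v set \<Rightarrow> nat" where
  "enter D A X = card {e\<in>A. fst (D e) \<notin> X \<and> snd (D e) \<in> X}"

text \<open>The arcs leaving \<open>X\<close> are those entering \<open>- X\<close>.\<close>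

definition net :: "('e \<Rightarrow> 'v \<times> 'v) \<Rightarrow> 'e set \<Rightarrow> 'v set \<Rightarrow> int" where
  "net D A X = int (enter D A X) - int (enter D A (- X))"

lemma enter_Un_disjoint:
  "finite A \<Longrightarrow> finite B \<Longrightarrow> A \<inter> B = {} \<Longrightarrow> enter D (A \<union> B) X = enter D A X + enter D B X"
  unfolding enter_def by (subst card_Un_disjoint[symmetric]) (auto intro: arg_cong[where f = card])

lemma enter_split: "finite A \<Longrightarrow> enter D A X = enter D (A - B) X + enter D (A \<inter> B) X"
  using enter_Un_disjoint[of "A - B" "A \<inter> B" D X] by (simp add: Un_Diff_Int Diff_Int_distrib2)

lemma net_Un_disjoint:
  "finite A \<Longrightarrow> finite B \<Longrightarrow> A \<inter> B = {} \<Longrightarrow> net D (A \<union> B) X = net D A X + net D B X"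
  by (simp add: net_def enter_Un_disjoint)

lemma net_split: "finite A \<Longrightarrow> net D A X = net D (A - B) X + net D (A \<inter> B) X"
  using net_Un_disjoint[of "A - B" "A \<inter> B" D X] by (simp add: Un_Diff_Int Diff_Int_distrib2)

lemma enter_mono: "finite B \<Longrightarrow> A \<subseteq> B \<Longrightarrow> enter D A X \<le> enter D B X"
  unfolding enter_def by (rule card_mono) auto

lemma net_le_enter: "net D A X \<le> int (enter D A X)"
  by (simp add: net_def)

lemma enter_pos_imp_arc: "1 \<le> enter D A X \<Longrightarrow> \<exists>e\<in>A. fst (D e) \<notin> X \<and> snd (D e) \<in> X"
  unfolding enter_def by (metis (no_types, lifting) card.empty empty_Collect_eq not_one_le_zero)

lemma enter_V:
  assumes "arcs_in V A D"
  shows "enter D A V = 0"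
proof -
  have "{e\<in>A. fst (D e) \<notin> V \<and> snd (D e) \<in> V} = {}"
    using assms unfolding arcs_in_def by blast
  then show ?thesis
    unfolding enter_def by (simp only: card.empty)
qed

lemma enter_submodular:
  assumes "finite A"
  shows "enter D A (X \<union> Y) + enter D A (X \<inter> Y) \<le> enter D A X + enter D A Y"
proof -
  have card_filter: "card {e\<in>A. P e} = (\<Sum>e\<in>A. if P e then 1 else 0)" for P
    using assms by (simp add: sum.If_cases Collect_conj_eq Int_commute)
  show ?thesis
    unfolding enter_def card_filter by (simp add: sum.distrib[symmetric] sum_mono)
qed

lemma net_singleton: "net D {e} X = of_bool (snd (D e) \<in> X) - of_bool (fst (D e) \<in> X)"
  by (auto simp: net_def enter_def Collect_conv_if)

lemma net_dwalk:
  "dwalk A D s t p \<Longrightarrow> distinct p \<Longrightarrow> net D (set p) X = of_bool (t \<in> X) - of_bool (s \<in> X)"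
proof (induction p arbitrary: s)
  case Nil
  then show ?case by (simp add: net_def enter_def)
next
  case (Cons e p)
  then have e: "fst (D e) = s" "dwalk A D (snd (D e)) t p" "e \<notin> set p" "distinct p"
    by auto
  have "net D (set (e # p)) X = net D {e} X + net D (set p) X"
    using net_Un_disjoint[of "{e}" "set p" D X] e(3) by simp
  moreover have "net D (set p) X = of_bool (t \<in> X) - of_bool (snd (D e) \<in> X)"
    using Cons.IH e(2,4) .
  ultimately show ?case
    using e(1) by (simp add: net_singleton)
qed

lemma net_dpath:
  assumes "dpath V A D s t p"
  shows "net D (set p) X = of_bool (t \<in> X) - of_bool (s \<in> X)"
  using net_dwalk[of A D s t p X] dpath_distinct_arcs[OF assms] assms unfolding dpath_def by simp

lemma enter_dpath_pos: "dpath V A D s t p \<Longrightarrow> s \<notin> X \<Longrightarrow> t \<in> X \<Longrightarrow> 1 \<le> enter D (set p) X"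
  using net_dpath[of V A D s t p X] net_le_enter[of D "set p" X] by simp

lemma sum_indeg:
  assumes "finite A" "finite X"
  shows "(\<Sum>v\<in>X. indeg A D v) = card {e\<in>A. fst (D e) \<in> X \<and> snd (D e) \<in> X} + enter D A X"
proof -
  have "(\<Sum>v\<in>X. indeg A D v) = card (\<Union>v\<in>X. {e\<in>A. snd (D e) = v})"
    unfolding indeg_def by (rule card_UN_disjoint[symmetric]) (use assms in auto)
  also have "(\<Union>v\<in>X. {e\<in>A. snd (D e) = v}) =
      {e\<in>A. fst (D e) \<in> X \<and> snd (D e) \<in> X} \<union> {e\<in>A. fst (D e) \<notin> X \<and> snd (D e) \<in> X}"
    by auto
  also have "card \<dots> = card {e\<in>A. fst (D e) \<in> X \<and> snd (D e) \<in> X} + enter D A X"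
    unfolding enter_def by (rule card_Un_disjoint) (use assms in auto)
  finally show ?thesis .
qed

lemma inner_arcs_swap_invariant:
  assumes "\<forall>e\<in>A. D' e = D e \<or> D' e = prod.swap (D e)"
  shows "{e\<in>A. fst (D' e) \<in> X \<and> snd (D' e) \<in> X} = {e\<in>A. fst (D e) \<in> X \<and> snd (D e) \<in> X}"
proof -
  have "fst (D' e) \<in> X \<and> snd (D' e) \<in> X \<longleftrightarrow> fst (D e) \<in> X \<and> snd (D e) \<in> X" if "e \<in> A" for e
    using assms that by (cases "D' e = D e") auto
  then show ?thesis
    by blast
qed

lemma sum_indeg_diff:
  assumes "finite E" "finite X" "orientation E ends D" "orientation E ends D'"
  shows "(\<Sum>v\<in>X. int (indeg E D' v) - int (indeg E D v)) = int (enter D' E X) - int (enter D E X)"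
proof -
  have "{e\<in>E. fst (D' e) \<in> X \<and> snd (D' e) \<in> X} = {e\<in>E. fst (D e) \<in> X \<and> snd (D e) \<in> X}"
    using assms(3,4) unfolding orientation_def
    by (intro inner_arcs_swap_invariant) (metis swap_swap)
  then show ?thesis
    using sum_indeg[OF assms(1,2), of D] sum_indeg[OF assms(1,2), of D']
    by (simp add: sum_subtractf flip: of_nat_sum)
qed

section \<open>Local arc-connectivity\<close>

definition arc_conn_ge :: "'v set \<Rightarrow> 'e set \<Rightarrow> ('e \<Rightarrow> 'v \<times> 'v) \<Rightarrow> nat \<Rightarrow> 'v \<Rightarrow> 'v \<Rightarrow> bool" where
  "arc_conn_ge V A D k s t \<longleftrightarrow> (\<forall>X\<subseteq>V. t \<in> X \<longrightarrow> s \<notin> X \<longrightarrow> k \<le> enter D A X)"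

lemma arc_conn_ge_refl: "arc_conn_ge V A D k t t"
  by (simp add: arc_conn_ge_def)

lemma arc_conn_ge_trans:
  assumes "arc_conn_ge V A D k r s" "arc_conn_ge V A D k s t"
  shows "arc_conn_ge V A D k r t"
  unfolding arc_conn_ge_def
proof (intro allI impI)
  fix X assume X: "X \<subseteq> V" "t \<in> X" "r \<notin> X"
  show "k \<le> enter D A X"
  proof (cases "s \<in> X")
    case True
    then show ?thesis using assms(1) X unfolding arc_conn_ge_def by blast
  next
    case False
    then show ?thesis using assms(2) X unfolding arc_conn_ge_def by blast
  qed
qed

lemma arc_conn_ge_mono: "arc_conn_ge V A D l s t \<Longrightarrow> k \<le> l \<Longrightarrow> arc_conn_ge V A D k s t"
  unfolding arc_conn_ge_def using order_trans by blast

lemma dpath_if_arc_conn_ge: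
  assumes "arcs_in V A D" "s \<in> V" "t \<in> V" "arc_conn_ge V A D 1 s t"
  shows "\<exists>p. dpath V A D s t p"
proof -
  define R where "R = {v\<in>V. \<exists>p. dwalk A D s v p}"
  have "s \<in> R"
    using assms(2) unfolding R_def by (auto intro: exI[of _ "[]"])
  have "t \<in> R"
  proof (rule ccontr)
    assume "t \<notin> R"
    then have "1 \<le> enter D A (V - R)"
      using assms(3,4) \<open>s \<in> R\<close> unfolding arc_conn_ge_def by blast
    then obtain e where e: "e \<in> A" "fst (D e) \<notin> V - R" "snd (D e) \<in> V - R"
      by (blast dest: enter_pos_imp_arc)
    then obtain p where "dwalk A D s (fst (D e)) p"
      using assms(1) unfolding R_def arcs_in_def by blast
    then have "dwalk A D s (snd (D e)) (p @ [e])"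
      using e by (simp add: dwalk_snoc)
    then show False
      using e unfolding R_def by blast
  qed
  then obtain p where "dwalk A D s t p"
    unfolding R_def by blast
  then show ?thesis
    using dwalk_shortcut[of A D s t p] assms(2) unfolding dpath_def by blast
qed

lemma dpath_if_net_pos:
  assumes "arcs_in V A D" "s \<in> V" "t \<in> V"
    and net: "\<And>X. X \<subseteq> V \<Longrightarrow> t \<in> X \<Longrightarrow> s \<notin> X \<Longrightarrow> 1 \<le> net D A X"
  shows "\<exists>p. dpath V A D s t p"
proof (rule dpath_if_arc_conn_ge[OF assms(1-3)])
  show "arc_conn_ge V A D 1 s t"
    unfolding arc_conn_ge_def
  proof (intro allI impI)
    fix X assume "X \<subseteq> V" "t \<in> X" "s \<notin> X"
    then have "1 \<le> net D A X"
      by (rule net)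
    then show "1 \<le> enter D A X"
      using net_le_enter[of D A X] by linarith
  qed
qed

lemma strongly_connected_iff_enter_pos:
  assumes "finite A" "arcs_in V A D"
  shows "strongly_connected V A D \<longleftrightarrow> (\<forall>X\<subseteq>V. X \<noteq> {} \<longrightarrow> X \<noteq> V \<longrightarrow> 1 \<le> enter D A X)"
proof
  assume sc: "strongly_connected V A D"
  show "\<forall>X\<subseteq>V. X \<noteq> {} \<longrightarrow> X \<noteq> V \<longrightarrow> 1 \<le> enter D A X"
  proof (intro allI impI)
    fix X assume X: "X \<subseteq> V" "X \<noteq> {}" "X \<noteq> V"
    then obtain u v where uv: "u \<in> V - X" "v \<in> X" by blast
    with sc X obtain p where p: "dpath V A D u v p"
      unfolding strongly_connected_def by blast
    then have "1 \<le> enter D (set p) X"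
      using enter_dpath_pos[OF p] uv by simp
    also have "\<dots> \<le> enter D A X"
      using enter_mono[OF assms(1) dpath_arcs_subset[OF p]] .
    finally show "1 \<le> enter D A X" .
  qed
next
  assume cuts: "\<forall>X\<subseteq>V. X \<noteq> {} \<longrightarrow> X \<noteq> V \<longrightarrow> 1 \<le> enter D A X"
  show "strongly_connected V A D"
    unfolding strongly_connected_def
  proof (intro ballI)
    fix u v assume "u \<in> V" "v \<in> V"
    moreover have "arc_conn_ge V A D 1 u v"
      unfolding arc_conn_ge_def
    proof (intro allI impI)
      fix X assume "X \<subseteq> V" "v \<in> X" "u \<notin> X"
      then show "1 \<le> enter D A X"
        using cuts \<open>u \<in> V\<close> by blast
    qed
    ultimately show "\<exists>p. dpath V A D u v p"
      using dpath_if_arc_conn_ge[OF assms(2)] by blast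
  qed
qed

definition tight_cut :: "'v set \<Rightarrow> 'e set \<Rightarrow> ('e \<Rightarrow> 'v \<times> 'v) \<Rightarrow> 'v set \<Rightarrow> bool" where
  "tight_cut V A D T \<longleftrightarrow> T \<subseteq> V \<and> T \<noteq> {} \<and> T \<noteq> V \<and> enter D A T \<le> 1"

lemma tight_cut_Int_Un:
  assumes A: "finite A" "arcs_in V A D" and sc: "strongly_connected V A D"
    and "tight_cut V A D T" "tight_cut V A D T'" and cross: "T \<inter> T' \<noteq> {}" "T \<union> T' \<noteq> V"
  shows "tight_cut V A D (T \<inter> T') \<and> tight_cut V A D (T \<union> T')"
proof -
  have cuts: "1 \<le> enter D A X" if "X \<subseteq> V" "X \<noteq> {}" "X \<noteq> V" for X
    using sc strongly_connected_iff_enter_pos[OF A] that by blast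
  have T: "T \<subseteq> V" "T \<noteq> V" "enter D A T \<le> 1" and T': "T' \<subseteq> V" "enter D A T' \<le> 1"
    using assms(4,5) unfolding tight_cut_def by blast+
  have sets: "T \<inter> T' \<subseteq> V" "T \<inter> T' \<noteq> V" "T \<union> T' \<subseteq> V" "T \<union> T' \<noteq> {}"
    using T T' cross by auto
  have "1 \<le> enter D A (T \<inter> T')" "1 \<le> enter D A (T \<union> T')"
    using cuts[OF sets(1) cross(1) sets(2)] cuts[OF sets(3,4) cross(2)] .
  moreover have "enter D A (T \<union> T') + enter D A (T \<inter> T') \<le> enter D A T + enter D A T'"
    by (rule enter_submodular[OF A(1)])
  ultimately have "enter D A (T \<inter> T') \<le> 1" "enter D A (T \<union> T') \<le> 1"
    using T(3) T'(2) by linarith+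
  then show ?thesis
    unfolding tight_cut_def using sets cross by blast
qed

lemma tight_cut_separates:
  assumes "arc_conn_ge V A D 2 b t" "\<not> arc_conn_ge V A D 2 x t" "x \<in> V"
  shows "\<exists>T. tight_cut V A D T \<and> b \<in> T \<and> x \<notin> T"
proof -
  have "\<not> arc_conn_ge V A D 2 x b"
    using arc_conn_ge_trans[OF _ assms(1)] assms(2) by blast
  then obtain X where "X \<subseteq> V" "b \<in> X" "x \<notin> X" "\<not> 2 \<le> enter D A X"
    unfolding arc_conn_ge_def by blast
  moreover from this have "tight_cut V A D X"
    unfolding tight_cut_def using assms(3) by auto
  ultimately show ?thesis
    by blast
qed

section \<open>Reversing arcs\<close>

definition reverse_arcs :: "('e \<Rightarrow> 'v \<times> 'v) \<Rightarrow> 'e set \<Rightarrow> 'e \<Rightarrow> 'v \<times> 'v" where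
  "reverse_arcs D P e = (if e \<in> P then prod.swap (D e) else D e)"

lemma arcs_in_reverse_arcs: "arcs_in V A D \<Longrightarrow> arcs_in V A (reverse_arcs D P)"
  by (auto simp: arcs_in_def reverse_arcs_def)

lemma enter_reverse_arcs:
  assumes "finite A"
  shows "int (enter (reverse_arcs D P) A X) = int (enter D A X) - net D (A \<inter> P) X"
proof -
  have "enter (reverse_arcs D P) (A - P) X = enter D (A - P) X"
    unfolding enter_def reverse_arcs_def by (rule arg_cong[where f = card]) auto
  moreover have "enter (reverse_arcs D P) (A \<inter> P) X = enter D (A \<inter> P) (- X)"
    unfolding enter_def reverse_arcs_def by (rule arg_cong[where f = card]) auto
  ultimately show ?thesis
    using enter_split[OF assms, of "reverse_arcs D P" X P] enter_split[OF assms, of D X P]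
    by (simp add: net_def)
qed

lemma net_reverse_arcs:
  "finite A \<Longrightarrow> net (reverse_arcs D P) A X = net D A X - 2 * net D (A \<inter> P) X"
  using enter_reverse_arcs[of A D P X] enter_reverse_arcs[of A D P "- X"]
  by (simp add: net_def)

lemma arc_conn_ge_reverse_dpath:
  assumes "finite A" "dpath V A D s t P" "arc_conn_ge V A D (Suc k) s t"
  shows "arc_conn_ge V A (reverse_arcs D (set P)) k s t"
  unfolding arc_conn_ge_def
proof (intro allI impI)
  fix X assume X: "X \<subseteq> V" "t \<in> X" "s \<notin> X"
  have "int (enter (reverse_arcs D (set P)) A X) = int (enter D A X) - 1"
    using enter_reverse_arcs[OF assms(1), of D "set P" X] net_dpath[OF assms(2), of X]
      dpath_arcs_subset[OF assms(2)] X
    by (simp add: Int_absorb1)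
  moreover have "Suc k \<le> enter D A X"
    using assms(3) X unfolding arc_conn_ge_def by blast
  ultimately show "k \<le> enter (reverse_arcs D (set P)) A X"
    by linarith
qed

lemma arc_disjoint_dpaths_if_net_2:
  assumes F: "finite F" "arcs_in V F D" and st: "s \<in> V" "t \<in> V"
    and net: "\<And>X. X \<subseteq> V \<Longrightarrow> t \<in> X \<Longrightarrow> s \<notin> X \<Longrightarrow> net D F X = 2"
  shows "\<exists>P1 P2. dpath V F D s t P1 \<and> dpath V F D s t P2 \<and> set P1 \<inter> set P2 = {}"
proof -
  have "1 \<le> net D F X" if "X \<subseteq> V" "t \<in> X" "s \<notin> X" for X
    using net[OF that] by simp
  then obtain P1 where P1: "dpath V F D s t P1"
    using dpath_if_net_pos[OF F(2) st] by blast
  have arcs: "arcs_in V (F - set P1) D"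
    using F(2) unfolding arcs_in_def by blast
  have "1 \<le> net D (F - set P1) X" if "X \<subseteq> V" "t \<in> X" "s \<notin> X" for X
    using net_split[OF F(1), of D X "set P1"] net[OF that] net_dpath[OF P1, of X] that
      dpath_arcs_subset[OF P1]
    by (simp add: Int_absorb1)
  then obtain P2 where P2: "dpath V (F - set P1) D s t P2"
    using dpath_if_net_pos[OF arcs st] by blast
  have "dpath V F D s t P2"
    by (rule dpath_mono[OF P2 Diff_subset])
  moreover have "set P1 \<inter> set P2 = {}"
    using dpath_arcs_subset[OF P2] by blast
  ultimately show ?thesis
    using P1 by blast
qed

text \<open>Menger for two paths: after reversing one \<open>s\<close>-\<open>t\<close> path \<open>P\<close> there is still an \<open>s\<close>-\<open>t\<close>
  path \<open>Q\<close>, and the arcs used by exactly one of \<open>P\<close>, \<open>Q\<close> have net flow 2 across every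
  \<open>s\<close>-\<open>t\<close> cut.\<close>

lemma arc_disjoint_dpaths_if_arc_conn_ge_2:
  assumes A: "finite A" "arcs_in V A D" and st: "s \<in> V" "t \<in> V"
    and conn: "arc_conn_ge V A D 2 s t"
  shows "\<exists>P1 P2. dpath V A D s t P1 \<and> dpath V A D s t P2 \<and> set P1 \<inter> set P2 = {}"
proof -
  obtain P where P: "dpath V A D s t P"
    using dpath_if_arc_conn_ge[OF A(2) st arc_conn_ge_mono[OF conn]] by auto
  have "arc_conn_ge V A (reverse_arcs D (set P)) 1 s t"
    using arc_conn_ge_reverse_dpath[OF A(1) P, of 1] conn by (simp add: numeral_2_eq_2)
  then obtain Q where Q: "dpath V A (reverse_arcs D (set P)) s t Q"
    using dpath_if_arc_conn_ge[OF arcs_in_reverse_arcs[OF A(2)] st] by blast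
  define F where "F = (set P - set Q) \<union> (set Q - set P)"
  have FA: "F \<subseteq> A"
    using dpath_arcs_subset[OF P] dpath_arcs_subset[OF Q] unfolding F_def by blast
  have net: "net D F X = 2" if X: "X \<subseteq> V" "t \<in> X" "s \<notin> X" for X
  proof -
    have "net D (set Q) X - 2 * net D (set Q \<inter> set P) X = 1"
      using net_dpath[OF Q, of X] net_reverse_arcs[of "set Q" D "set P" X] X(2,3) by simp
    moreover have "net D F X = net D (set P - set Q) X + net D (set Q - set P) X"
      unfolding F_def by (rule net_Un_disjoint) auto
    moreover have "set Q \<inter> set P = set P \<inter> set Q"
      by blast
    ultimately show ?thesis
      using net_split[of "set P" D X "set Q"] net_split[of "set Q" D X "set P"] net_dpath[OF P, of X] X(2,3)
      by simp
  qed
  have "arcs_in V F D"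
    using A(2) FA unfolding arcs_in_def by blast
  then obtain P1 P2 where P12: "dpath V F D s t P1" "dpath V F D s t P2" "set P1 \<inter> set P2 = {}"
    using arc_disjoint_dpaths_if_net_2[OF finite_subset[OF FA A(1)] _ st net] by blast
  have "dpath V A D s t P1" "dpath V A D s t P2"
    using dpath_mono[OF P12(1) FA] dpath_mono[OF P12(2) FA] .
  then show ?thesis
    using P12(3) by blast
qed

lemma indeg_reverse_dpath:
  assumes "finite A" "dpath V A D s t P"
  shows "int (indeg A (reverse_arcs D (set P)) v) = int (indeg A D v) + of_bool (v = s) - of_bool (v = t)"
proof -
  have "{e\<in>A. fst (reverse_arcs D (set P) e) \<in> {v} \<and> snd (reverse_arcs D (set P) e) \<in> {v}}
      = {e\<in>A. fst (D e) \<in> {v} \<and> snd (D e) \<in> {v}}"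
    by (rule inner_arcs_swap_invariant) (simp add: reverse_arcs_def)
  then show ?thesis
    using sum_indeg[OF assms(1), of "{v}"] enter_reverse_arcs[OF assms(1), of D "set P" "{v}"]
      net_dpath[OF assms(2), of "{v}"] dpath_arcs_subset[OF assms(2)]
    by (auto simp: Int_absorb1)
qed

text \<open>Only the cuts separating \<open>t\<close> from \<open>s\<close> lose an entering arc, and each of them is
  entered by both paths.\<close>

lemma strongly_connected_reverse_dpath:
  assumes A: "finite A" "arcs_in V A D" and sc: "strongly_connected V A D"
    and P: "dpath V A D s t P" "dpath V A D s t P'" "set P \<inter> set P' = {}"
  shows "strongly_connected V A (reverse_arcs D (set P))"
proof -
  have cuts: "1 \<le> enter D A X" if "X \<subseteq> V" "X \<noteq> {}" "X \<noteq> V" for X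
    using sc strongly_connected_iff_enter_pos[OF A] that by blast
  have "1 \<le> enter (reverse_arcs D (set P)) A X" if X: "X \<subseteq> V" "X \<noteq> {}" "X \<noteq> V" for X
  proof -
    have rev: "int (enter (reverse_arcs D (set P)) A X) = int (enter D A X) - (of_bool (t \<in> X) - of_bool (s \<in> X))"
      using enter_reverse_arcs[OF A(1), of D "set P" X] net_dpath[OF P(1), of X] dpath_arcs_subset[OF P(1)]
      by (simp add: Int_absorb1)
    show ?thesis
    proof (cases "t \<in> X \<and> s \<notin> X")
      case True
      have "enter D (set P) X + enter D (set P') X = enter D (set P \<union> set P') X"
        using enter_Un_disjoint[of "set P" "set P'" D X] P(3) by simp
      also have "\<dots> \<le> enter D A X"
        using dpath_arcs_subset[OF P(1)] dpath_arcs_subset[OF P(2)] by (intro enter_mono[OF A(1)]) simp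
      finally have "2 \<le> enter D A X"
        using enter_dpath_pos[OF P(1)] enter_dpath_pos[OF P(2)] True by fastforce
      then show ?thesis
        using rev True by simp
    next
      case False
      then have "of_bool (t \<in> X) - of_bool (s \<in> X) \<le> (0::int)"
        by auto
      then show ?thesis
        using rev cuts[OF X] by linarith
    qed
  qed
  then show ?thesis
    using strongly_connected_iff_enter_pos[OF A(1) arcs_in_reverse_arcs[OF A(2)]] by blast
qed

section \<open>Decreasingly sorted vectors\<close>

lemma sorted_desc_split:
  fixes xs :: "nat list"
  assumes "sorted_wrt (\<ge>) xs"
  shows "xs = filter (\<lambda>x. b < x) xs @ filter (\<lambda>x. x = b) xs @ filter (\<lambda>x. x < b) xs"
  using assms
proof (induction xs)
  case Nil
  then show ?case by simp
next
  case (Cons x xs)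
  then have le: "\<forall>y\<in>set xs. y \<le> x" and IH: "xs = filter (\<lambda>x. b < x) xs @ filter (\<lambda>x. x = b) xs @ filter (\<lambda>x. x < b) xs"
    by auto
  consider "b < x" | "x = b" | "x < b" by linarith
  then show ?case
  proof cases
    case 1
    then show ?thesis using IH by simp
  next
    case 2
    then have "filter (\<lambda>x. b < x) xs = []" using le by (auto simp: filter_empty_conv)
    then show ?thesis using IH 2 by simp
  next
    case 3
    then have "filter (\<lambda>x. b < x) xs = []" "filter (\<lambda>x. x = b) xs = []" "filter (\<lambda>x. x < b) xs = xs"
      using le by (auto simp: filter_empty_conv filter_id_conv)
    then show ?thesis using 3 by simp
  qed
qed

lemma sorted_desc_eq:
  fixes xs ys :: "nat list"
  assumes "sorted_wrt (\<ge>) xs" "sorted_wrt (\<ge>) ys" "mset xs = mset ys"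
  shows "xs = ys"
proof -
  have "sorted (rev xs)" "sorted (rev ys)" "mset (rev ys) = mset (rev xs)"
    using assms by (simp_all add: sorted_wrt_rev)
  then have "rev xs = rev ys"
    using properties_for_sort[of "rev ys" "rev xs"] sorted_sort_id[of "rev xs"] by simp
  then show ?thesis by simp
qed

lemma sorted_desc_decompose:
  fixes xs :: "nat list"
  assumes "sorted_wrt (\<ge>) xs"
  shows "xs = rev (sorted_list_of_multiset (filter_mset (\<lambda>x. b < x) (mset xs)))
    @ replicate (count (mset xs) b) b @ filter (\<lambda>x. x < b) xs"
proof -
  have "filter (\<lambda>x. b < x) xs = rev (sorted_list_of_multiset (filter_mset (\<lambda>x. b < x) (mset xs)))"
    using assms by (intro sorted_desc_eq) (simp_all add: sorted_wrt_filter sorted_wrt_rev)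
  moreover have "filter (\<lambda>x. x = b) xs = replicate (count (mset xs) b) b"
    unfolding replicate_count_mset_eq_filter_eq by (auto intro: filter_cong)
  ultimately show ?thesis
    using sorted_desc_split[OF assms, of b] by simp
qed

lemma lex_less_desc_if_count:
  fixes M N :: "nat multiset"
  assumes size: "size N = size M"
    and above: "\<forall>x>b. count N x = count M x" and at: "count N b < count M b"
  shows "lex_less (rev (sorted_list_of_multiset N)) (rev (sorted_list_of_multiset M))"
proof -
  define xs where "xs = rev (sorted_list_of_multiset M)"
  define ys where "ys = rev (sorted_list_of_multiset N)"
  have sorted: "sorted_wrt (\<ge>) xs" "sorted_wrt (\<ge>) ys" and mset: "mset xs = M" "mset ys = N"
    unfolding xs_def ys_def by (simp_all add: sorted_wrt_rev)
  define A where "A = rev (sorted_list_of_multiset (filter_mset (\<lambda>x. b < x) M))"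
  define C where "C = filter (\<lambda>x. x < b) xs"
  define C' where "C' = filter (\<lambda>x. x < b) ys"
  have "filter_mset (\<lambda>x. b < x) N = filter_mset (\<lambda>x. b < x) M"
    using above by (intro multiset_eqI) simp
  then have xs: "xs = A @ replicate (count M b) b @ C"
    and ys: "ys = A @ replicate (count N b) b @ C'"
    using sorted_desc_decompose[OF sorted(1), of b] sorted_desc_decompose[OF sorted(2), of b]
    unfolding A_def C_def C'_def mset by simp_all
  have "length xs = length ys"
    using size mset by (metis size_mset)
  then have "C' \<noteq> []"
    using xs ys at by auto
  then have "C' ! 0 < b"
    unfolding C'_def using nth_mem by fastforce
  define i where "i = length A + count N b"
  have "i < length ys" "i < length xs"
    unfolding i_def using xs ys at \<open>C' \<noteq> []\<close> by simp_all
  moreover have "take i ys = take i xs"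
    unfolding i_def using xs ys at by (simp add: take_append min_def)
  moreover have "ys ! i < xs ! i"
    unfolding i_def using xs ys at \<open>C' ! 0 < b\<close> by (simp add: nth_append)
  ultimately have "lex_less ys xs"
    unfolding lex_less_def by blast
  then show ?thesis
    unfolding xs_def ys_def .
qed

lemma count_image_mset_mset_set:
  "finite V \<Longrightarrow> count (image_mset f (mset_set V)) x = card {v\<in>V. f v = x}"
  by (simp add: count_image_mset Int_commute vimage_def Collect_conj_eq)

lemma lex_less_desc_image_shift:
  fixes f g :: "'a \<Rightarrow> nat"
  assumes V: "finite V" "s \<in> V" "t \<in> V" and gap: "f s + 2 \<le> f t"
    and g: "g s = f s + 1" "g t = f t - 1" "\<forall>v\<in>V - {s, t}. g v = f v"
  shows "lex_less (rev (sorted_list_of_multiset (image_mset g (mset_set V))))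
                  (rev (sorted_list_of_multiset (image_mset f (mset_set V))))"
proof (rule lex_less_desc_if_count[where b = "f t"])
  show "size (image_mset g (mset_set V)) = size (image_mset f (mset_set V))"
    by simp
  have "s \<noteq> t"
    using gap by auto
  have "g v = x \<longleftrightarrow> f v = x" if "v \<in> V" "f t < x" for v x
    using that assms by (cases "v = s"; cases "v = t") auto
  then show "\<forall>x>f t. count (image_mset g (mset_set V)) x = count (image_mset f (mset_set V)) x"
    using V(1) by (auto simp: count_image_mset_mset_set intro!: arg_cong[where f = card])
  have "g v = f t \<longleftrightarrow> f v = f t \<and> v \<noteq> t" if "v \<in> V" for v
    using that assms \<open>s \<noteq> t\<close> by (cases "v = s"; cases "v = t") auto
  then have "{v\<in>V. g v = f t} = {v\<in>V. f v = f t} - {t}"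
    by auto
  moreover have "card ({v\<in>V. f v = f t} - {t}) < card {v\<in>V. f v = f t}"
    using V by (intro card_Diff1_less) auto
  ultimately show "count (image_mset g (mset_set V)) (f t) < count (image_mset f (mset_set V)) (f t)"
    using V(1) by (simp add: count_image_mset_mset_set)
qed

text \<open>With truncated subtraction, \<open>x - c\<close> is the excess of \<open>x\<close> over \<open>c\<close>.\<close>

lemma lex_less_imp_excess_less:
  fixes xs ys :: "nat list"
  assumes "sorted_wrt (\<ge>) xs" "lex_less xs ys"
  shows "\<exists>c. (\<Sum>x\<leftarrow>xs. x - c) < (\<Sum>x\<leftarrow>ys. x - c)"
proof -
  obtain i where i: "i < length xs" "i < length ys" "take i xs = take i ys" "xs ! i < ys ! i"
    using assms(2) unfolding lex_less_def by blast
  define c where "c = ys ! i - 1"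
  have drop_xs: "drop i xs = xs ! i # drop (Suc i) xs" and drop_ys: "drop i ys = ys ! i # drop (Suc i) ys"
    using i(1,2) by (simp_all add: Cons_nth_drop_Suc)
  have "sorted_wrt (\<ge>) (drop i xs)"
    using assms(1) by (rule sorted_wrt_drop)
  then have "\<forall>x\<in>set (drop i xs). x \<le> c"
    using i(4) unfolding drop_xs c_def by auto
  then have xs_zero: "(\<Sum>x\<leftarrow>drop i xs. x - c) = 0"
    by simp
  have "ys ! i - c = 1"
    using i(4) unfolding c_def by simp
  then have "1 \<le> (\<Sum>x\<leftarrow>drop i ys. x - c)"
    unfolding drop_ys by simp
  with xs_zero have drop_less: "(\<Sum>x\<leftarrow>drop i xs. x - c) < (\<Sum>x\<leftarrow>drop i ys. x - c)"
    by linarith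
  have split: "(\<Sum>x\<leftarrow>zs. x - c) = (\<Sum>x\<leftarrow>take i zs. x - c) + (\<Sum>x\<leftarrow>drop i zs. x - c)"
    for zs :: "nat list"
    by (simp only: sum_list_append[symmetric] map_append[symmetric] append_take_drop_id)
  have "(\<Sum>x\<leftarrow>xs. x - c) < (\<Sum>x\<leftarrow>ys. x - c)"
    unfolding split[of xs] split[of ys] i(3) using drop_less by simp
  then show ?thesis
    by blast
qed

lemma sum_excess_le:
  fixes f g :: "'a \<Rightarrow> nat"
  assumes "finite V" "Z \<subseteq> V" "\<forall>v\<in>Z. c \<le> f v" "\<forall>v\<in>V - Z. f v \<le> c" "sum f Z \<le> sum g Z"
  shows "(\<Sum>v\<in>V. f v - c) \<le> (\<Sum>v\<in>V. g v - c)"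
proof -
  have "(\<Sum>v\<in>V. f v - c) = (\<Sum>v\<in>Z. f v - c)"
    using assms by (intro sum.mono_neutral_right) auto
  moreover have "(\<Sum>v\<in>Z. f v - c) + card Z * c = sum f Z"
  proof -
    have "(\<Sum>v\<in>Z. f v - c) + card Z * c = (\<Sum>v\<in>Z. f v - c + c)"
      by (simp add: sum.distrib)
    also have "\<dots> = sum f Z"
      using assms(3) by (intro sum.cong) auto
    finally show ?thesis .
  qed
  moreover have "sum g Z \<le> (\<Sum>v\<in>Z. g v - c) + card Z * c"
  proof -
    have "sum g Z \<le> (\<Sum>v\<in>Z. g v - c + c)"
      by (intro sum_mono) simp
    then show ?thesis
      by (simp add: sum.distrib)
  qed
  moreover have "(\<Sum>v\<in>Z. g v - c) \<le> (\<Sum>v\<in>V. g v - c)"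
    using assms(1,2) by (rule sum_mono2) simp
  ultimately show ?thesis
    using assms(5) by linarith
qed

lemma sorted_indeg_vector: "sorted_wrt (\<ge>) (indeg_vector V E D)"
  unfolding indeg_vector_def by (simp add: sorted_wrt_rev)

lemma sum_list_map_indeg_vector: "(\<Sum>x\<leftarrow>indeg_vector V E D. h x) = (\<Sum>v\<in>V. h (indeg E D v))"
proof -
  have "(\<Sum>x\<leftarrow>indeg_vector V E D. h x) = sum_mset (image_mset h (image_mset (indeg E D) (mset_set V)))"
    unfolding indeg_vector_def by (simp flip: sum_mset_sum_list)
  also have "\<dots> = (\<Sum>v\<in>V. h (indeg E D v))"
    by (simp add: sum_unfold_sum_mset image_mset.compositionality comp_def)
  finally show ?thesis .
qed

section \<open>Uncrossing\<close>

lemma card_insert_Un_less: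
  assumes "finite \<F>" "A \<in> \<F>" "B \<in> \<F>" "A \<noteq> B"
  shows "card (insert (A \<union> B) (\<F> - {A, B})) < card \<F>"
proof -
  have "2 \<le> card \<F>"
    using card_mono[OF assms(1), of "{A, B}"] assms(2-4) by simp
  have "card (insert (A \<union> B) (\<F> - {A, B})) \<le> card (\<F> - {A, B}) + 1"
    by (simp add: card_insert_le_m1 assms(1))
  also have "\<dots> = card \<F> - 1"
    using assms \<open>2 \<le> card \<F>\<close> by (simp add: card_Diff_subset)
  finally show ?thesis
    using \<open>2 \<le> card \<F>\<close> by linarith
qed

lemma sum_Union_nonneg:
  fixes g :: "'a \<Rightarrow> 'b::ordered_comm_monoid_add"
  assumes "finite \<F>" "\<forall>A\<in>\<F>. P A"
    and Un: "\<And>A B. P A \<Longrightarrow> P B \<Longrightarrow> A \<inter> B \<noteq> {} \<Longrightarrow> P (A \<union> B)"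
    and finite: "\<And>A. P A \<Longrightarrow> finite A" and nonneg: "\<And>A. P A \<Longrightarrow> 0 \<le> sum g A"
  shows "0 \<le> sum g (\<Union>\<F>)"
  using assms(1,2)
proof (induction "card \<F>" arbitrary: \<F> rule: less_induct)
  case less
  show ?case
  proof (cases "\<F> = {}")
    case True
    then show ?thesis by simp
  next
    case False
    then obtain A where A: "A \<in> \<F>" by blast
    show ?thesis
    proof (cases "\<exists>B\<in>\<F> - {A}. A \<inter> B \<noteq> {}")
      case True
      then obtain B where B: "B \<in> \<F>" "B \<noteq> A" "A \<inter> B \<noteq> {}" by blast
      define \<G> where "\<G> = insert (A \<union> B) (\<F> - {A, B})"
      have "card \<G> < card \<F>"
        unfolding \<G>_def using card_insert_Un_less[OF less.prems(1) A B(1)] B(2) by simp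
      moreover have "finite \<G>" "\<forall>X\<in>\<G>. P X"
        unfolding \<G>_def using less.prems A B Un by auto
      ultimately have "0 \<le> sum g (\<Union>\<G>)"
        by (rule less.hyps)
      moreover have "\<Union>\<G> = \<Union>\<F>"
        unfolding \<G>_def using A B by auto
      ultimately show ?thesis
        by simp
    next
      case False
      define \<G> where "\<G> = \<F> - {A}"
      have G: "finite \<G>" "\<forall>X\<in>\<G>. P X"
        unfolding \<G>_def using less.prems by auto
      have "card \<G> < card \<F>"
        unfolding \<G>_def by (rule card_Diff1_less[OF less.prems(1) A])
      then have "0 \<le> sum g (\<Union>\<G>)"
        using G by (rule less.hyps)
      moreover have "\<Union>\<F> = A \<union> \<Union>\<G>" "A \<inter> \<Union>\<G> = {}"
        unfolding \<G>_def using A False by auto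
      moreover have "finite A" "finite (\<Union>\<G>)"
        using finite A less.prems(2) G by auto
      ultimately show ?thesis
        using nonneg[of A] A less.prems(2) by (simp add: sum.union_disjoint)
    qed
  qed
qed

locale crossing_family =
  fixes V :: "'a set" and tight :: "'a set \<Rightarrow> bool" and w :: "'a \<Rightarrow> int"
  assumes finite_V: "finite V"
    and sum_V: "sum w V = 0"
    and tight_subset: "tight T \<Longrightarrow> T \<subseteq> V"
    and tight_nonneg: "tight T \<Longrightarrow> 0 \<le> sum w T"
    and tight_crossing: "tight T \<Longrightarrow> tight T' \<Longrightarrow> T \<inter> T' \<noteq> {} \<Longrightarrow> T \<union> T' \<noteq> V \<Longrightarrow>
      tight (T \<inter> T') \<and> tight (T \<union> T')"
begin

definition tight_meet :: "'a set \<Rightarrow> bool" where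
  "tight_meet S \<longleftrightarrow> S \<subseteq> V \<and> S \<noteq> {} \<and> (\<forall>x\<in>V - S. \<exists>T. tight T \<and> S \<subseteq> T \<and> x \<notin> T)"

lemma sum_compl: "S \<subseteq> V \<Longrightarrow> sum w (V - S) = - sum w S"
  using sum.subset_diff[OF _ finite_V, of S w] sum_V by simp

text \<open>The complement of \<open>S\<close> is the union of the complements of the tight sets containing \<open>S\<close>;
  two of these complements that meet come from a crossing pair, whose intersection is tight.\<close>

lemma tight_meet_nonneg:
  assumes "tight_meet S"
  shows "0 \<le> sum w S"
proof -
  define P where "P A \<longleftrightarrow> (\<exists>T. tight T \<and> S \<subseteq> T \<and> A = V - T)" for A
  define \<F> where "\<F> = (\<lambda>T. V - T) ` {T. tight T \<and> S \<subseteq> T}"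
  have "{T. tight T \<and> S \<subseteq> T} \<subseteq> Pow V"
    using tight_subset by auto
  then have "finite \<F>"
    unfolding \<F>_def using finite_V finite_subset by blast
  moreover have "\<forall>A\<in>\<F>. P A"
    unfolding \<F>_def P_def by auto
  ultimately have "0 \<le> sum (\<lambda>v. - w v) (\<Union>\<F>)"
  proof (rule sum_Union_nonneg)
    fix A B assume "P A" "P B" "A \<inter> B \<noteq> {}"
    then obtain T T' where T: "tight T" "S \<subseteq> T" "A = V - T" and T': "tight T'" "S \<subseteq> T'" "B = V - T'"
      unfolding P_def by blast
    have "T \<inter> T' \<noteq> {}"
      using assms T T' unfolding tight_meet_def by blast
    moreover have "T \<union> T' \<noteq> V"
      using \<open>A \<inter> B \<noteq> {}\<close> T T' by blast
    ultimately have "tight (T \<inter> T')"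
      using tight_crossing T T' by blast
    moreover have "A \<union> B = V - (T \<inter> T')"
      using T T' by blast
    ultimately show "P (A \<union> B)"
      unfolding P_def using T T' by blast
  next
    fix A assume "P A"
    then show "finite A"
      unfolding P_def using finite_V by auto
  next
    fix A assume "P A"
    then obtain T where "tight T" "A = V - T"
      unfolding P_def by blast
    then show "0 \<le> sum (\<lambda>v. - w v) A"
      using tight_nonneg tight_subset sum_compl by (simp add: sum_negf)
  qed
  moreover have "\<Union>\<F> = V - S"
    using assms unfolding tight_meet_def \<F>_def by blast
  ultimately show ?thesis
    using assms sum_compl unfolding tight_meet_def by (simp add: sum_negf)
qed

lemma tight_meet_Un:
  assumes "tight_meet S" "tight_meet S'" "S \<inter> S' \<noteq> {}"
  shows "tight_meet (S \<union> S')"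
  unfolding tight_meet_def
proof (intro conjI ballI)
  show "S \<union> S' \<subseteq> V" "S \<union> S' \<noteq> {}"
    using assms unfolding tight_meet_def by auto
  fix x assume x: "x \<in> V - (S \<union> S')"
  obtain T T' where T: "tight T" "S \<subseteq> T" "x \<notin> T" and T': "tight T'" "S' \<subseteq> T'" "x \<notin> T'"
    using assms(1,2) x unfolding tight_meet_def by blast
  have "tight (T \<union> T')"
    using tight_crossing[OF T(1) T'(1)] assms(3) x T T' by blast
  then show "\<exists>T. tight T \<and> S \<union> S' \<subseteq> T \<and> x \<notin> T"
    using T T' by blast
qed

lemma sum_nonneg_if_separated:
  assumes "Z \<subseteq> V" "\<forall>b\<in>Z. \<forall>x\<in>V - Z. \<exists>T. tight T \<and> b \<in> T \<and> x \<notin> T"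
  shows "0 \<le> sum w Z"
proof -
  define S where "S b = {v\<in>V. \<forall>T. tight T \<and> b \<in> T \<longrightarrow> v \<in> T}" for b
  have meet: "tight_meet (S b)" if "b \<in> Z" for b
    unfolding tight_meet_def
  proof (intro conjI ballI)
    show "S b \<subseteq> V" "S b \<noteq> {}"
      using that assms(1) unfolding S_def by auto
    fix x assume "x \<in> V - S b"
    then obtain T where "tight T" "b \<in> T" "x \<notin> T"
      unfolding S_def by blast
    moreover have "S b \<subseteq> T"
      unfolding S_def using calculation by blast
    ultimately show "\<exists>T. tight T \<and> S b \<subseteq> T \<and> x \<notin> T"
      by blast
  qed
  have "0 \<le> sum w (\<Union>(S ` Z))"
  proof (rule sum_Union_nonneg[where P = tight_meet])
    show "finite (S ` Z)"
      using assms(1) finite_V finite_subset by blast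
    show "\<forall>A\<in>S ` Z. tight_meet A"
      using meet by blast
  next
    fix A assume "tight_meet A"
    then show "finite A"
      unfolding tight_meet_def using finite_V finite_subset by blast
  qed (fact tight_meet_Un, fact tight_meet_nonneg)
  moreover have "Z = \<Union>(S ` Z)"
    using assms unfolding S_def by blast
  ultimately show ?thesis
    by simp
qed

end

lemma crossing_family_tight_cut:
  assumes G: "ugraph V E ends"
    and D: "strong_orientation V E ends D" and D': "strong_orientation V E ends D'"
  shows "crossing_family V (tight_cut V E D) (\<lambda>v. int (indeg E D' v) - int (indeg E D v))"
proof -
  have fin: "finite V" "finite E"
    using G by (simp_all add: ugraph_def)
  have o: "orientation E ends D" "orientation E ends D'"
    and sc: "strongly_connected V E D" "strongly_connected V E D'"
    using D D' unfolding strong_orientation_def by blast+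
  have arcs: "arcs_in V E D" "arcs_in V E D'"
    using orientation_arcs_in[OF G o(1)] orientation_arcs_in[OF G o(2)] .
  have sum_w: "(\<Sum>v\<in>X. int (indeg E D' v) - int (indeg E D v)) = int (enter D' E X) - int (enter D E X)"
    if "X \<subseteq> V" for X
    using sum_indeg_diff[OF fin(2) finite_subset[OF that fin(1)] o] .
  show ?thesis
  proof
    show "finite V"
      by (fact fin(1))
    show "(\<Sum>v\<in>V. int (indeg E D' v) - int (indeg E D v)) = 0"
      using sum_w[of V] enter_V[OF arcs(1)] enter_V[OF arcs(2)] by simp
  next
    fix T assume "tight_cut V E D T"
    then have T: "T \<subseteq> V" "T \<noteq> {}" "T \<noteq> V" "enter D E T \<le> 1"
      unfolding tight_cut_def by blast+
    then show "T \<subseteq> V"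
      by blast
    have "1 \<le> enter D' E T"
      using sc(2) strongly_connected_iff_enter_pos[OF fin(2) arcs(2)] T(1-3) by blast
    then show "0 \<le> (\<Sum>v\<in>T. int (indeg E D' v) - int (indeg E D v))"
      using sum_w[OF T(1)] T(4) by linarith
  next
    fix T T'
    assume "tight_cut V E D T" "tight_cut V E D T'" "T \<inter> T' \<noteq> {}" "T \<union> T' \<noteq> V"
    then show "tight_cut V E D (T \<inter> T') \<and> tight_cut V E D (T \<union> T')"
      by (rule tight_cut_Int_Un[OF fin(2) arcs(1) sc(1)])
  qed
qed

lemma not_dec_min_strong_if_improving_pair:
  assumes G: "ugraph V E ends" and D: "strong_orientation V E ends D"
    and t: "t \<in> V" "indeg E D s + 2 \<le> indeg E D t"
    and P: "dpath V E D s t P1" "dpath V E D s t P2" "set P1 \<inter> set P2 = {}"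
  shows "\<not> dec_min_strong V E ends D"
proof -
  have fin: "finite V" "finite E"
    using G by (simp_all add: ugraph_def)
  have o: "orientation E ends D" and sc: "strongly_connected V E D"
    using D unfolding strong_orientation_def by blast+
  have "s \<in> V"
    using P(1) by (simp add: dpath_def)
  have "s \<noteq> t"
    using t(2) by auto
  let ?D2 = "reverse_arcs D (set P1)"
  have "orientation E ends ?D2"
    using o unfolding orientation_def reverse_arcs_def by auto
  moreover have "strongly_connected V E ?D2"
    using strongly_connected_reverse_dpath[OF fin(2) orientation_arcs_in[OF G o] sc P] .
  moreover have "lex_less (indeg_vector V E ?D2) (indeg_vector V E D)"
    unfolding indeg_vector_def
  proof (rule lex_less_desc_image_shift[OF fin(1) \<open>s \<in> V\<close> t])
    have indeg: "int (indeg E ?D2 v) = int (indeg E D v) + of_bool (v = s) - of_bool (v = t)" for v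
      by (rule indeg_reverse_dpath[OF fin(2) P(1)])
    show "indeg E ?D2 s = indeg E D s + 1"
      using indeg[of s] \<open>s \<noteq> t\<close> by simp
    show "indeg E ?D2 t = indeg E D t - 1"
      using indeg[of t] \<open>s \<noteq> t\<close> t(2) by simp
    show "\<forall>v\<in>V - {s, t}. indeg E ?D2 v = indeg E D v"
    proof
      fix v assume "v \<in> V - {s, t}"
      then show "indeg E ?D2 v = indeg E D v"
        using indeg[of v] by simp
    qed
  qed
  ultimately show ?thesis
    unfolding dec_min_strong_def strong_orientation_def by blast
qed

lemma excess_less_if_lex_less_indeg_vector:
  assumes "lex_less (indeg_vector V E D') (indeg_vector V E D)"
  shows "\<exists>c. (\<Sum>v\<in>V. indeg E D' v - c) < (\<Sum>v\<in>V. indeg E D v - c)"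
proof -
  obtain c where "(\<Sum>x\<leftarrow>indeg_vector V E D'. x - c) < (\<Sum>x\<leftarrow>indeg_vector V E D. x - c)"
    using lex_less_imp_excess_less[OF sorted_indeg_vector assms] by blast
  then show ?thesis
    unfolding sum_list_map_indeg_vector by blast
qed

lemma sum_indeg_le_arc_conn_closure:
  assumes G: "ugraph V E ends"
    and D: "strong_orientation V E ends D" and D': "strong_orientation V E ends D'"
  shows "sum (indeg E D) {z\<in>V. \<exists>t\<in>W. arc_conn_ge V E D 2 z t}
    \<le> sum (indeg E D') {z\<in>V. \<exists>t\<in>W. arc_conn_ge V E D 2 z t}"
proof -
  define Z where "Z = {z\<in>V. \<exists>t\<in>W. arc_conn_ge V E D 2 z t}"
  have "Z \<subseteq> V"
    unfolding Z_def by blast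
  have sep: "\<forall>b\<in>Z. \<forall>x\<in>V - Z. \<exists>T. tight_cut V E D T \<and> b \<in> T \<and> x \<notin> T"
  proof (intro ballI)
    fix b x assume "b \<in> Z" "x \<in> V - Z"
    then have x: "x \<in> V" "x \<notin> Z"
      by blast+
    from \<open>b \<in> Z\<close> obtain t where t: "t \<in> W" "arc_conn_ge V E D 2 b t"
      unfolding Z_def by blast
    have "\<not> arc_conn_ge V E D 2 x t"
      using x t(1) unfolding Z_def by blast
    then show "\<exists>T. tight_cut V E D T \<and> b \<in> T \<and> x \<notin> T"
      by (rule tight_cut_separates[OF t(2) _ x(1)])
  qed
  interpret crossing_family V "tight_cut V E D" "\<lambda>v. int (indeg E D' v) - int (indeg E D v)"
    by (rule crossing_family_tight_cut[OF G D D'])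
  have "0 \<le> (\<Sum>v\<in>Z. int (indeg E D' v) - int (indeg E D v))"
    by (rule sum_nonneg_if_separated[OF \<open>Z \<subseteq> V\<close> sep])
  then show ?thesis
    unfolding Z_def[symmetric] by (simp add: sum_subtractf flip: of_nat_sum)
qed

lemma dec_min_strong_if_no_improving_pair:
  assumes G: "ugraph V E ends" and D: "strong_orientation V E ends D"
    and no_pair: "\<not> (\<exists>s\<in>V. \<exists>t\<in>V. indeg E D t \<ge> indeg E D s + 2 \<and>
          (\<exists>P1 P2. dpath V E D s t P1 \<and> dpath V E D s t P2 \<and> set P1 \<inter> set P2 = {}))"
  shows "dec_min_strong V E ends D"
  unfolding dec_min_strong_def
proof (intro conjI allI impI notI)
  show "strong_orientation V E ends D"
    by (fact D)
  fix D' assume D': "strong_orientation V E ends D'"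
    and "lex_less (indeg_vector V E D') (indeg_vector V E D)"
  then obtain c where excess: "(\<Sum>v\<in>V. indeg E D' v - c) < (\<Sum>v\<in>V. indeg E D v - c)"
    using excess_less_if_lex_less_indeg_vector by blast
  have fin: "finite V" "finite E"
    using G by (simp_all add: ugraph_def)
  have arcs: "arcs_in V E D"
    using G D orientation_arcs_in unfolding strong_orientation_def by blast
  define Z where "Z = {z\<in>V. \<exists>t\<in>{t\<in>V. c < indeg E D t}. arc_conn_ge V E D 2 z t}"
  have "Z \<subseteq> V"
    unfolding Z_def by blast
  have above: "\<forall>z\<in>Z. c \<le> indeg E D z"
  proof
    fix z assume "z \<in> Z"
    then obtain t where t: "z \<in> V" "t \<in> V" "c < indeg E D t" "arc_conn_ge V E D 2 z t"
      unfolding Z_def by blast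
    have "\<exists>P1 P2. dpath V E D z t P1 \<and> dpath V E D z t P2 \<and> set P1 \<inter> set P2 = {}"
      using arc_disjoint_dpaths_if_arc_conn_ge_2[OF fin(2) arcs t(1,2,4)] .
    then have "\<not> indeg E D t \<ge> indeg E D z + 2"
      using no_pair t(1,2) by blast
    then show "c \<le> indeg E D z"
      using t(3) by linarith
  qed
  have below: "\<forall>v\<in>V - Z. indeg E D v \<le> c"
  proof (rule ballI, rule ccontr)
    fix v assume "v \<in> V - Z" "\<not> indeg E D v \<le> c"
    then have "v \<in> Z"
      using arc_conn_ge_refl[of V E D 2 v] unfolding Z_def by auto
    then show False
      using \<open>v \<in> V - Z\<close> by blast
  qed
  have "sum (indeg E D) Z \<le> sum (indeg E D') Z"
    unfolding Z_def by (rule sum_indeg_le_arc_conn_closure[OF G D D'])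
  then have "(\<Sum>v\<in>V. indeg E D v - c) \<le> (\<Sum>v\<in>V. indeg E D' v - c)"
    by (rule sum_excess_le[OF fin(1) \<open>Z \<subseteq> V\<close> above below])
  with excess show False
    by linarith
qed

theorem theorem6p1:
  fixes V :: "'v set" and E :: "'e set" and ends :: "'e \<Rightarrow> 'v \<times> 'v"
    and D :: "'e \<Rightarrow> 'v \<times> 'v"
  assumes "ugraph V E ends"
    and "\<exists>D0. strong_orientation V E ends D0"
    and "strong_orientation V E ends D"
  shows "dec_min_strong V E ends D \<longleftrightarrow>
    \<not> (\<exists>s\<in>V. \<exists>t\<in>V. indeg E D t \<ge> indeg E D s + 2 \<and>
          (\<exists>P1 P2. dpath V E D s t P1 \<and> dpath V E D s t P2 \<and> set P1 \<inter> set P2 = {}))"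
  \<comment> \<open>the second hypothesis is implied by the third\<close>
  using not_dec_min_strong_if_improving_pair[OF assms(1,3)]
    dec_min_strong_if_no_improving_pair[OF assms(1,3)]
  by blast

end
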